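(* Let $D\ge1$, let $Q_D$ be the $D$-dimensional hypercube on $X=\{0,1\}^D$ with adjacency matrix $A$. For $1\le i<j\le D$ the matrix $B_{ij}=\alpha^*_iA\alpha^*_j-\alpha^*_jA\alpha^*_i$ is antisymmetric and $A$-like.
   Context: $Q_D$ is the graph with vertex set $X=\{0,1\}^D$, two vertices adjacent iff they differ in exactly one coordinate. Matrices are real with rows and columns indexed by $X$. A matrix $B$ is $A$-like if $BA=AB$ and $B_{xy}=0$ for all $x,y\in X$ that are neither equal nor adjacent; it is antisymmetric if $B^t=-B$. For $1\le i\le D$, $\alpha^*_i$ is the diagonal matrix with $(x,x)$-entry $1$ if $x_i=0$ and $-1$ if $x_i=1$. *)

theory Defs
  imports Complex_Main
begin

text \<open>Vertices of Q_D: 0/1 vectors with coordinates 1..D, encoded as functions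
  nat \<Rightarrow> bool that are False outside {1..D} (True = 1).
  Real matrices indexed by X are functions X \<Rightarrow> X \<Rightarrow> real; only entries on X matter.\<close>

type_synonym vtx = "nat \<Rightarrow> bool"
type_synonym xmat = "vtx \<Rightarrow> vtx \<Rightarrow> real"

definition cube :: "nat \<Rightarrow> vtx set" where
  "cube D = {x. \<forall>i. x i \<longrightarrow> i \<in> {1..D}}"

definition adjacent :: "nat \<Rightarrow> vtx \<Rightarrow> vtx \<Rightarrow> bool" where
  "adjacent D x y \<longleftrightarrow> x \<in> cube D \<and> y \<in> cube D \<and> card {i \<in> {1..D}. x i \<noteq> y i} = 1"

definition adj_mat :: "nat \<Rightarrow> xmat" where
  "adj_mat D x y = (if adjacent D x y then 1 else 0)"

definition mmult :: "nat \<Rightarrow> xmat \<Rightarrow> xmat \<Rightarrow> xmat" where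
  "mmult D M N x y = (\<Sum>z\<in>cube D. M x z * N z y)"

definition mdiff :: "xmat \<Rightarrow> xmat \<Rightarrow> xmat" where
  "mdiff M N x y = M x y - N x y"

definition alpha_star :: "nat \<Rightarrow> xmat" where
  "alpha_star i x y = (if x = y then (if x i then -1 else 1) else 0)"

definition A_like :: "nat \<Rightarrow> xmat \<Rightarrow> bool" where
  "A_like D B \<longleftrightarrow>
     (\<forall>x\<in>cube D. \<forall>y\<in>cube D. mmult D B (adj_mat D) x y = mmult D (adj_mat D) B x y) \<and>
     (\<forall>x\<in>cube D. \<forall>y\<in>cube D. x \<noteq> y \<and> \<not> adjacent D x y \<longrightarrow> B x y = 0)"

definition antisymmetric_mat :: "nat \<Rightarrow> xmat \<Rightarrow> bool" where
  "antisymmetric_mat D B \<longleftrightarrow> (\<forall>x\<in>cube D. \<forall>y\<in>cube D. B y x = - B x y)"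

definition B_mat :: "nat \<Rightarrow> nat \<Rightarrow> nat \<Rightarrow> xmat" where
  "B_mat D i j = mdiff (mmult D (mmult D (alpha_star i) (adj_mat D)) (alpha_star j))
                       (mmult D (mmult D (alpha_star j) (adj_mat D)) (alpha_star i))"

end

theory Submission
  imports Defs
begin

text \<open>Let \<open>e(x) = (-1)^(x_i + x_j)\<close> and let \<open>P_k\<close> be the permutation matrix of flipping
  coordinate \<open>k\<close>. A direct computation gives \<open>B_ij = 2 E (P_i - P_j)\<close> with \<open>E = diag e\<close>, so
  \<open>B_ij\<close> vanishes off the edges, and it is antisymmetric because transposition swaps \<open>i\<close> and \<open>j\<close>.
  As \<open>A\<close> is symmetric and \<open>B_ij\<close> antisymmetric, \<open>A B_ij = -(B_ij A)\<^sup>t\<close>, so commutation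
  amounts to antisymmetry of \<open>B_ij A\<close>, whose \<open>(x,y)\<close> entry is
  \<open>2 e(x) (A(x + e_i, y) - A(x + e_j, y))\<close>. It vanishes unless exactly one of \<open>x + e_i\<close>,
  \<open>x + e_j\<close> is adjacent to \<open>y\<close>; then \<open>y\<close> arises from \<open>x\<close> by flipping one of \<open>i, j\<close> and one
  coordinate outside \<open>{i, j}\<close>, whence \<open>e(y) = -e(x)\<close>.\<close>

definition flip :: "nat \<Rightarrow> vtx \<Rightarrow> vtx" where
  "flip k x = x(k := \<not> x k)"

definition coord_sign :: "nat \<Rightarrow> vtx \<Rightarrow> real" where
  "coord_sign i x = (if x i then -1 else 1)"

lemma flip_flip [simp]: "flip k (flip k x) = x"
  by (auto simp: flip_def)

lemma flip_commute: "flip k (flip l x) = flip l (flip k x)"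
  by (auto simp: flip_def fun_eq_iff)

lemma flip_eq_flip_iff [simp]: "flip k x = flip l x \<longleftrightarrow> k = l"
  by (auto simp: flip_def fun_eq_iff)

lemma flip_in_cube_iff [simp]: "k \<in> {1..D} \<Longrightarrow> flip k x \<in> cube D \<longleftrightarrow> x \<in> cube D"
  by (auto simp: flip_def cube_def split: if_splits)

lemma coord_sign_flip: "coord_sign i (flip k x) = (if k = i then - coord_sign i x else coord_sign i x)"
  by (simp add: coord_sign_def flip_def)

lemma finite_cube: "finite (cube D)"
proof (rule finite_subset)
  show "cube D \<subseteq> {x. \<forall>i. i \<notin> {1..D} \<longrightarrow> x i = False}"
    by (auto simp: cube_def)
  show "finite {x::vtx. \<forall>i. i \<notin> {1..D} \<longrightarrow> x i = False}"
    using finite_set_of_finite_funs[of "{1..D}" UNIV False] by simp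
qed

lemma eq_flip_if_differ_only_at:
  assumes "x \<in> cube D" "y \<in> cube D" "{i \<in> {1..D}. x i \<noteq> y i} = {k}"
  shows "y = flip k x"
proof
  fix i
  have "i \<in> {1..D} \<Longrightarrow> x i \<noteq> y i \<longleftrightarrow> i = k" and "k \<in> {1..D}"
    using assms(3) by blast+
  then show "y i = flip k x i"
    using assms(1,2) by (cases "i \<in> {1..D}") (auto simp: flip_def cube_def)
qed

lemma adjacent_iff_flip:
  "adjacent D x y \<longleftrightarrow> x \<in> cube D \<and> y \<in> cube D \<and> (\<exists>k\<in>{1..D}. y = flip k x)"
proof
  assume adj: "adjacent D x y"
  then obtain k where k: "{i \<in> {1..D}. x i \<noteq> y i} = {k}"
    unfolding adjacent_def by (meson card_1_singletonE)
  with adj show "x \<in> cube D \<and> y \<in> cube D \<and> (\<exists>k\<in>{1..D}. y = flip k x)"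
    using eq_flip_if_differ_only_at unfolding adjacent_def by blast
next
  assume "x \<in> cube D \<and> y \<in> cube D \<and> (\<exists>k\<in>{1..D}. y = flip k x)"
  then obtain k where "x \<in> cube D" "y \<in> cube D" "k \<in> {1..D}" "y = flip k x"
    by blast
  moreover from this have "{i \<in> {1..D}. x i \<noteq> y i} = {k}"
    by (auto simp: flip_def)
  ultimately show "adjacent D x y"
    by (simp add: adjacent_def)
qed

lemma adjacent_flip: "x \<in> cube D \<Longrightarrow> k \<in> {1..D} \<Longrightarrow> adjacent D x (flip k x)"
  by (auto simp: adjacent_iff_flip)

lemma adj_mat_sym: "adj_mat D x y = adj_mat D y x"
proof -
  have "adjacent D x y \<longleftrightarrow> adjacent D y x"
    unfolding adjacent_iff_flip by (metis flip_flip)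
  then show ?thesis
    by (simp add: adj_mat_def)
qed

lemma adj_mat_flip_swap:
  assumes "k \<in> {1..D}"
  shows "adj_mat D (flip k x) y = adj_mat D x (flip k y)"
proof -
  have "y = flip l (flip k x) \<longleftrightarrow> flip k y = flip l x" for l
    by (metis flip_commute flip_flip)
  then have "adjacent D (flip k x) y \<longleftrightarrow> adjacent D x (flip k y)"
    using assms unfolding adjacent_iff_flip by simp
  then show ?thesis
    by (simp add: adj_mat_def)
qed

lemma alpha_star_apply: "alpha_star i x y = (if x = y then coord_sign i x else 0)"
  by (simp add: alpha_star_def coord_sign_def)

lemma mmult_alpha_star_left:
  "x \<in> cube D \<Longrightarrow> mmult D (alpha_star i) M x y = coord_sign i x * M x y"
  by (simp add: mmult_def alpha_star_apply finite_cube if_distrib[of "\<lambda>c. c * M _ y"] cong: if_cong)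

lemma mmult_alpha_star_right:
  "y \<in> cube D \<Longrightarrow> mmult D M (alpha_star i) x y = M x y * coord_sign i y"
  by (simp add: mmult_def alpha_star_apply finite_cube if_distrib[of "\<lambda>c. M x _ * c"] cong: if_cong)

lemma mmult_sym_antisym:
  assumes "\<forall>u\<in>cube D. \<forall>v\<in>cube D. M v u = M u v" "antisymmetric_mat D N"
    and "x \<in> cube D" "y \<in> cube D"
  shows "mmult D M N x y = - mmult D N M y x"
proof -
  have "M x z * N z y = - (N y z * M z x)" if "z \<in> cube D" for z
  proof -
    have "M z x = M x z" "N z y = - N y z"
      using assms that unfolding antisymmetric_mat_def by blast+
    then show ?thesis
      by simp
  qed
  then show ?thesis
    unfolding mmult_def sum_negf[symmetric] by (intro sum.cong) auto
qed

lemma B_mat_apply: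
  assumes "x \<in> cube D" "y \<in> cube D"
  shows "B_mat D i j x y = adj_mat D x y * (coord_sign i x * coord_sign j y - coord_sign j x * coord_sign i y)"
  using assms by (simp add: B_mat_def mdiff_def mmult_alpha_star_left mmult_alpha_star_right algebra_simps)

definition pair_sign :: "nat \<Rightarrow> nat \<Rightarrow> vtx \<Rightarrow> real" where
  "pair_sign i j x = coord_sign i x * coord_sign j x"

lemma pair_sign_commute: "pair_sign i j = pair_sign j i"
  by (simp add: pair_sign_def fun_eq_iff)

lemma pair_sign_flip:
  "i \<noteq> j \<Longrightarrow> pair_sign i j (flip k x) = (if k \<in> {i, j} then - pair_sign i j x else pair_sign i j x)"
  by (auto simp: pair_sign_def coord_sign_flip)

lemma B_mat_eq_flips:
  assumes "i \<noteq> j" "i \<in> {1..D}" "j \<in> {1..D}" "x \<in> cube D" "y \<in> cube D"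
  shows "B_mat D i j x y = 2 * pair_sign i j x * (of_bool (y = flip i x) - of_bool (y = flip j x))"
proof (cases "adjacent D x y")
  case False
  then have "y \<noteq> flip i x" "y \<noteq> flip j x"
    using assms adjacent_flip by metis+
  with False show ?thesis
    using assms by (simp add: B_mat_apply adj_mat_def)
next
  case True
  then obtain k where k: "y = flip k x"
    unfolding adjacent_iff_flip by blast
  have "B_mat D i j x y = coord_sign i x * coord_sign j y - coord_sign j x * coord_sign i y"
    using True by (simp add: B_mat_apply[OF assms(4,5)] adj_mat_def)
  also have "\<dots> = 2 * pair_sign i j x * (of_bool (k = i) - of_bool (k = j))"
    using assms(1) by (cases "k = i"; cases "k = j") (simp_all add: k coord_sign_flip pair_sign_def)
  also have "\<dots> = 2 * pair_sign i j x * (of_bool (y = flip i x) - of_bool (y = flip j x))"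
    by (simp add: k)
  finally show ?thesis .
qed

lemma mmult_B_mat_adj_mat:
  assumes "i \<noteq> j" "i \<in> {1..D}" "j \<in> {1..D}" "x \<in> cube D" "y \<in> cube D"
  shows "mmult D (B_mat D i j) (adj_mat D) x y
    = 2 * pair_sign i j x * (adj_mat D (flip i x) y - adj_mat D (flip j x) y)"
proof -
  have "mmult D (B_mat D i j) (adj_mat D) x y
    = (\<Sum>z\<in>cube D. 2 * pair_sign i j x * (if z = flip i x then adj_mat D z y else 0))
    - (\<Sum>z\<in>cube D. 2 * pair_sign i j x * (if z = flip j x then adj_mat D z y else 0))"
    unfolding mmult_def sum_subtractf[symmetric]
    using assms by (intro sum.cong) (auto simp: B_mat_eq_flips algebra_simps)
  also have "\<dots> = 2 * pair_sign i j x * (adj_mat D (flip i x) y - adj_mat D (flip j x) y)"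
    using assms by (simp add: sum_distrib_left[symmetric] finite_cube algebra_simps)
  finally show ?thesis .
qed

lemma pair_sign_across_adjacency:
  assumes "i \<noteq> j" "i \<in> {1..D}" "j \<in> {1..D}"
    and "adjacent D (flip i x) y" "\<not> adjacent D (flip j x) y"
  shows "pair_sign i j y = - pair_sign i j x"
proof -
  obtain k where k: "k \<in> {1..D}" "y = flip k (flip i x)" and x: "x \<in> cube D"
    using assms adjacent_iff_flip by auto
  have "y \<noteq> flip l (flip j x)" if "l \<in> {1..D}" for l
    using assms(3,5) that x adjacent_flip flip_in_cube_iff by metis
  then have "k \<noteq> i" "k \<noteq> j"
    using assms(2,3) k flip_commute by (metis flip_flip)+
  then show ?thesis
    using assms(1) k by (simp add: pair_sign_flip)
qed

lemma mmult_B_mat_adj_mat_antisym: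
  assumes "i \<noteq> j" "i \<in> {1..D}" "j \<in> {1..D}" "x \<in> cube D" "y \<in> cube D"
  shows "mmult D (B_mat D i j) (adj_mat D) y x = - mmult D (B_mat D i j) (adj_mat D) x y"
proof -
  have sign: "pair_sign i j y = - pair_sign i j x"
    if "adjacent D (flip i x) y \<noteq> adjacent D (flip j x) y"
    using that assms pair_sign_across_adjacency[of i j] pair_sign_across_adjacency[of j i]
    by (metis pair_sign_commute)
  have "adj_mat D (flip k y) x = adj_mat D (flip k x) y" if "k \<in> {1..D}" for k
    using that adj_mat_flip_swap adj_mat_sym by metis
  then show ?thesis
    using assms sign by (auto simp: mmult_B_mat_adj_mat adj_mat_def)
qed

theorem lemma9p5:
  fixes D i j :: nat
  assumes "D \<ge> 1" and "1 \<le> i" and "i < j" and "j \<le> D"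
  shows "antisymmetric_mat D (B_mat D i j) \<and> A_like D (B_mat D i j)"
proof -
  have ij: "i \<noteq> j" "i \<in> {1..D}" "j \<in> {1..D}"
    using assms by auto
  have antisym: "antisymmetric_mat D (B_mat D i j)"
    unfolding antisymmetric_mat_def by (auto simp: B_mat_apply adj_mat_sym[of D _] algebra_simps)
  have "mmult D (B_mat D i j) (adj_mat D) x y = mmult D (adj_mat D) (B_mat D i j) x y"
    if "x \<in> cube D" "y \<in> cube D" for x y
    using that ij antisym mmult_B_mat_adj_mat_antisym mmult_sym_antisym adj_mat_sym by metis
  moreover have "B_mat D i j x y = 0"
    if "x \<in> cube D" "y \<in> cube D" "\<not> adjacent D x y" for x y
    using that by (simp add: B_mat_apply adj_mat_def)
  ultimately show ?thesis
    using antisym unfolding A_like_def by blast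
qed

end
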